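(* There are absolute constants $c>0$ and $k_0$ such that the following holds. Let $J$ be an interval and $\mathcal{F}$ a finite set of pairwise distinct functions, each defined on all of $J$ and of the form $t\mapsto\sqrt{at^2+bt+c'}$ on $J$ (so any two of them intersect at most twice on $J$). Let $k$ be the complexity of the lower envelope $L=\min_{f\in\mathcal{F}}f$ restricted to $J$, i.e. the number of maximal subintervals of $J$ on which $L$ coincides with a single function of $\mathcal{F}$. If $k\ge k_0$, then there are at least $ck^2$ intersections of functions in $\mathcal{F}$ that do not lie on $L$, i.e. pairs $\{f,g\}\subseteq\mathcal{F}$ and times $t\in J$ with $f(t)=g(t)>L(t)$. *)

theory Defs
  imports "HOL-Analysis.Analysis"
begin

definition sqrt_quadratic_on :: "real set \<Rightarrow> (real \<Rightarrow> real) \<Rightarrow> bool" where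
  "sqrt_quadratic_on J f \<longleftrightarrow>
     (\<exists>a b c. \<forall>t\<in>J. a * t\<^sup>2 + b * t + c \<ge> 0 \<and> f t = sqrt (a * t\<^sup>2 + b * t + c))"

definition lower_env :: "(real \<Rightarrow> real) set \<Rightarrow> real \<Rightarrow> real" where
  "lower_env F t = Min ((\<lambda>f. f t) ` F)"

definition env_piece :: "real set \<Rightarrow> (real \<Rightarrow> real) set \<Rightarrow> real set \<Rightarrow> bool" where
  "env_piece J F I \<longleftrightarrow> I \<noteq> {} \<and> I \<subseteq> J \<and> is_interval I \<and>
     (\<exists>f\<in>F. \<forall>t\<in>I. f t = lower_env F t)"

definition env_complexity :: "real set \<Rightarrow> (real \<Rightarrow> real) set \<Rightarrow> nat" where
  "env_complexity J F = card {I. env_piece J F I \<and> (\<forall>I'. env_piece J F I' \<and> I \<subseteq> I' \<longrightarrow> I' = I)}"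

definition off_env_intersections :: "real set \<Rightarrow> (real \<Rightarrow> real) set \<Rightarrow> ((real \<Rightarrow> real) set \<times> real) set" where
  "off_env_intersections J F = {({f, g}, t) | f g t. f \<in> F \<and> g \<in> F \<and> f \<noteq> g \<and> t \<in> J \<and>
       f t = g t \<and> f t > lower_env F t}"

end

theory Submission
  imports Defs
begin

text \<open>
  Away from the finitely many crossings, the envelope is attained by a unique active function.
  Since two functions meet at most twice, the sequence of active functions along \<open>J\<close> has no
  subsequence \<open>a b a b\<close>, so both the complexity \<open>k\<close> and the number of breakpoints (points near
  which no single function forms the envelope) are at most \<open>4m + 1\<close>, where \<open>m\<close> is the number
  of active functions. Anchor each active function at a point where it is active; two active
  functions cross between their anchors. For square roots of quadratics a crossing on the
  envelope is a breakpoint \<open>s\<close>: otherwise both squares would be tangent at \<open>s\<close> to the square of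
  the function forming the envelope nearby, and their difference would be a multiple of
  \<open>(t - s)\<^sup>2\<close>, which cannot change sign. Among the functions on the envelope at \<open>s\<close> anchored on
  one side of \<open>s\<close>, every pair with a third anchor between them crosses off the envelope, and
  such a pair is counted at a single \<open>s\<close>. Hence all but \<open>O(m)\<close> of the roughly \<open>m\<^sup>2/2\<close> pairs
  of active functions give distinct intersections off the envelope, while \<open>k \<le> 4m + 1\<close>.
\<close>

section \<open>Counting\<close>

definition abab_free :: "'a::linorder set \<Rightarrow> ('a \<Rightarrow> 'b) \<Rightarrow> bool" where
  "abab_free U lab \<longleftrightarrow> (\<forall>p1\<in>U. \<forall>p2\<in>U. \<forall>p3\<in>U. \<forall>p4\<in>U.
     p1 < p2 \<longrightarrow> p2 < p3 \<longrightarrow> p3 < p4 \<longrightarrow> lab p1 = lab p3 \<longrightarrow> lab p2 = lab p4 \<longrightarrow> lab p1 = lab p2)"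

lemma abab_freeD:
  "abab_free U lab \<Longrightarrow> p1 \<in> U \<Longrightarrow> p2 \<in> U \<Longrightarrow> p3 \<in> U \<Longrightarrow> p4 \<in> U \<Longrightarrow>
    p1 < p2 \<Longrightarrow> p2 < p3 \<Longrightarrow> p3 < p4 \<Longrightarrow> lab p1 = lab p3 \<Longrightarrow> lab p2 = lab p4 \<Longrightarrow> lab p1 = lab p2"
  unfolding abab_free_def by blast

text \<open>Every point of \<open>P\<close> other than its maximum is the last point of \<open>P\<close> with its label, or
  immediately precedes the first point of \<open>P\<close> with some label, or is followed in \<open>P\<close> by a point
  with the same label; in the last case the label of a separating point determines it.
  Each of the three kinds therefore injects into the labels.\<close>
lemma card_le_if_abab_free:
  fixes P U :: "'a::linorder set" and lab :: "'a \<Rightarrow> 'b"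
  assumes "finite P" and "P \<subseteq> U" and "finite (lab ` U)" and "abab_free U lab"
    and separated: "\<And>p p'. p \<in> P \<Longrightarrow> p' \<in> P \<Longrightarrow> p < p' \<Longrightarrow> lab p = lab p' \<Longrightarrow>
      \<exists>s\<in>U. p < s \<and> s < p' \<and> lab s \<noteq> lab p"
  shows "card P \<le> 4 * card (lab ` U) + 1"
proof (cases "P = {}")
  case True
  then show ?thesis by simp
next
  case False
  note abab = abab_freeD[OF assms(4)]
  define mx where "mx = Max P"
  define succ where "succ p = Min {q\<in>P. p < q}" for p
  have succ: "succ p \<in> P \<and> p < succ p \<and> (\<forall>q\<in>P. p < q \<longrightarrow> succ p \<le> q)" if "p \<in> P" "p \<noteq> mx" for p
  proof -
    have "p < mx" using that Max_ge[OF \<open>finite P\<close>, of p] unfolding mx_def by auto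
    then have ne: "{q\<in>P. p < q} \<noteq> {}" using Max_in[OF \<open>finite P\<close> False] unfolding mx_def by auto
    have fin: "finite {q\<in>P. p < q}" using \<open>finite P\<close> by auto
    show ?thesis using Min_in[OF fin ne] Min_le[OF fin] unfolding succ_def by blast
  qed
  define last where "last = {p\<in>P. \<forall>q\<in>P. p < q \<longrightarrow> lab q \<noteq> lab p}"
  define first where "first = {p\<in>P. \<forall>q\<in>P. q < p \<longrightarrow> lab q \<noteq> lab p}"
  define repeated where "repeated = {p\<in>P. p \<noteq> mx \<and> lab (succ p) = lab p}"
  define pre_first where "pre_first = {p\<in>P. p \<noteq> mx \<and> succ p \<in> first}"
  define sep where "sep p = (SOME s. s \<in> U \<and> p < s \<and> s < succ p \<and> lab s \<noteq> lab p)" for p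
  have "inj_on lab last"
  proof (rule inj_onI)
    fix p q assume "p \<in> last" "q \<in> last" "lab p = lab q"
    then have "\<not> p < q" "\<not> q < p" unfolding last_def by auto
    then show "p = q" by simp
  qed
  then have card_last: "card last \<le> card (lab ` U)"
    using \<open>P \<subseteq> U\<close> \<open>finite (lab ` U)\<close> by (intro card_inj_on_le) (auto simp: last_def)
  have "inj_on lab first"
  proof (rule inj_onI)
    fix p q assume "p \<in> first" "q \<in> first" "lab p = lab q"
    then have "\<not> p < q" "\<not> q < p" unfolding first_def by auto
    then show "p = q" by simp
  qed
  then have card_first: "card first \<le> card (lab ` U)"
    using \<open>P \<subseteq> U\<close> \<open>finite (lab ` U)\<close> by (intro card_inj_on_le) (auto simp: first_def)
  have "inj_on succ pre_first"
  proof (rule inj_onI)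
    fix p1 p2 assume p12: "p1 \<in> pre_first" "p2 \<in> pre_first" "succ p1 = succ p2"
    then have "\<not> p1 < p2" "\<not> p2 < p1"
      using succ[of p1] succ[of p2] by (fastforce simp: pre_first_def)+
    then show "p1 = p2" by simp
  qed
  then have card_pre_first: "card pre_first \<le> card first"
    using \<open>finite P\<close> by (intro card_inj_on_le) (auto simp: pre_first_def first_def)
  have sep: "sep p \<in> U \<and> p < sep p \<and> sep p < succ p \<and> lab (sep p) \<noteq> lab p" if "p \<in> repeated" for p
  proof -
    have "\<exists>s. s \<in> U \<and> p < s \<and> s < succ p \<and> lab s \<noteq> lab p"
      using separated[of p "succ p"] succ[of p] that unfolding repeated_def by auto
    then show ?thesis unfolding sep_def by (rule someI_ex)
  qed
  have "inj_on (lab \<circ> sep) repeated"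
  proof -
    have False if "q1 \<in> repeated" "q2 \<in> repeated" "q1 < q2" "lab (sep q1) = lab (sep q2)" for q1 q2
    proof -
      have "succ q1 \<le> q2" using succ[of q1] that unfolding repeated_def by auto
      then have "lab q1 = lab (sep q1)"
        using that sep[of q1] sep[of q2] succ[of q1] \<open>P \<subseteq> U\<close> unfolding repeated_def
        by (intro abab[of q1 "sep q1" "succ q1" "sep q2"]) auto
      then show False using sep[of q1] that(1) by simp
    qed
    then show ?thesis by (intro inj_onI) (metis comp_apply linorder_neqE)
  qed
  then have card_repeated: "card repeated \<le> card (lab ` U)"
    using sep \<open>finite (lab ` U)\<close> by (intro card_inj_on_le) auto
  have "P \<subseteq> {mx} \<union> last \<union> pre_first \<union> repeated"
  proof
    fix p assume "p \<in> P"
    show "p \<in> {mx} \<union> last \<union> pre_first \<union> repeated"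
    proof (rule ccontr)
      assume n: "p \<notin> {mx} \<union> last \<union> pre_first \<union> repeated"
      then have "p \<noteq> mx" by auto
      note sp = succ[OF \<open>p \<in> P\<close> this]
      have d: "lab (succ p) \<noteq> lab p" using n \<open>p \<in> P\<close> \<open>p \<noteq> mx\<close> unfolding repeated_def by auto
      obtain q where q: "q \<in> P" "p < q" "lab q = lab p" using n \<open>p \<in> P\<close> unfolding last_def by auto
      obtain q' where q': "q' \<in> P" "q' < succ p" "lab q' = lab (succ p)"
        using n \<open>p \<in> P\<close> \<open>p \<noteq> mx\<close> sp unfolding pre_first_def first_def by auto
      have "q' < p" using q' sp d by (metis not_le order.not_eq_order_implies_strict)
      moreover have "succ p < q" using sp q d by (metis order.not_eq_order_implies_strict)
      ultimately have "lab q' = lab p"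
        using q q' sp \<open>p \<in> P\<close> \<open>P \<subseteq> U\<close> by (intro abab[of q' p "succ p" q]) auto
      then show False using q' d by simp
    qed
  qed
  then have "card P \<le> card ({mx} \<union> last \<union> pre_first \<union> repeated)"
    using \<open>finite P\<close> by (intro card_mono) (auto simp: last_def pre_first_def repeated_def)
  also have "\<dots> \<le> card ({mx} \<union> last \<union> pre_first) + card repeated" by (rule card_Un_le)
  also have "\<dots> \<le> card ({mx} \<union> last) + card pre_first + card repeated"
    using card_Un_le[of "{mx} \<union> last" pre_first] by linarith
  also have "\<dots> \<le> 1 + card last + card pre_first + card repeated"
    using card_Un_le[of "{mx}" last] by simp
  finally show ?thesis using card_last card_first card_pre_first card_repeated by linarith
qed

lemma card_pairs_with_between_ge:
  fixes S :: "'a set" and \<tau> :: "'a \<Rightarrow> 'b::linorder"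
  assumes "finite S" "inj_on \<tau> S"
  shows "(card S - 1) * (card S - 2) \<le>
    2 * card {(f, g) \<in> S \<times> S. \<tau> f < \<tau> g \<and> (\<exists>h\<in>S. \<tau> f < \<tau> h \<and> \<tau> h < \<tau> g)}"
  using assms
proof (induction "card S" arbitrary: S)
  case 0
  then show ?case by simp
next
  case (Suc n)
  define Q where "Q S = {(f, g) \<in> S \<times> S. \<tau> f < \<tau> g \<and> (\<exists>h\<in>S. \<tau> f < \<tau> h \<and> \<tau> h < \<tau> g)}" for S
  have top: "\<exists>x\<in>X. \<forall>y\<in>X. y \<noteq> x \<longrightarrow> \<tau> y < \<tau> x" if "finite X" "X \<noteq> {}" "X \<subseteq> S" for X
  proof -
    have "Max (\<tau> ` X) \<in> \<tau> ` X" using that by (intro Max_in) auto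
    then obtain x where x: "x \<in> X" "\<tau> x = Max (\<tau> ` X)" by auto
    have "\<tau> y < \<tau> x" if "y \<in> X" "y \<noteq> x" for y
    proof -
      have "\<tau> y \<le> \<tau> x" using x that \<open>finite X\<close> by simp
      moreover have "\<tau> y \<noteq> \<tau> x"
        using inj_onD[OF Suc.prems(2)] that x(1) \<open>X \<subseteq> S\<close> by blast
      ultimately show ?thesis by simp
    qed
    then show ?thesis using x by blast
  qed
  obtain x where x: "x \<in> S" "\<And>y. y \<in> S \<Longrightarrow> y \<noteq> x \<Longrightarrow> \<tau> y < \<tau> x"
    using top[of S] Suc.prems(1) Suc.hyps(2) by force
  define S' where "S' = S - {x}"
  have "card S' = n" using Suc.hyps(2) x(1) Suc.prems(1) unfolding S'_def by simp
  have IH: "(n - 1) * (n - 2) \<le> 2 * card (Q S')"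
    using Suc.hyps(1)[of S'] \<open>card S' = n\<close> Suc.prems unfolding Q_def S'_def by (auto intro: inj_on_subset)
  show ?case
  proof (cases "n = 0")
    case True
    then show ?thesis using Suc.hyps(2) by simp
  next
    case False
    have "finite S'" "S' \<subseteq> S" using Suc.prems(1) unfolding S'_def by auto
    moreover have "S' \<noteq> {}" using \<open>card S' = n\<close> False by force
    ultimately obtain y where y: "y \<in> S'" "\<And>f. f \<in> S' \<Longrightarrow> f \<noteq> y \<Longrightarrow> \<tau> f < \<tau> y"
      using top[of S'] by blast
    text \<open>The pairs \<open>(f, x)\<close> with \<open>f \<noteq> y\<close> are new: \<open>y\<close> lies between.\<close>
    define R where "R = (\<lambda>f. (f, x)) ` (S' - {y})"
    have "card R = n - 1" unfolding R_def using \<open>finite S'\<close> y(1) \<open>card S' = n\<close>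
      by (subst card_image) (auto simp: inj_on_def)
    have "R \<subseteq> Q S"
    proof
      fix p assume "p \<in> R"
      then obtain f where "f \<in> S'" "f \<noteq> y" "p = (f, x)" unfolding R_def by auto
      then show "p \<in> Q S"
        using y x \<open>S' \<subseteq> S\<close> unfolding Q_def S'_def by auto
    qed
    moreover have "Q S' \<subseteq> Q S" unfolding Q_def S'_def by auto
    moreover have "Q S' \<inter> R = {}" unfolding Q_def R_def S'_def by auto
    moreover have "finite (Q S)" unfolding Q_def using Suc.prems(1) by (auto intro: finite_subset[of _ "S \<times> S"])
    ultimately have "card (Q S') + card R \<le> card (Q S)"
      using card_Un_disjoint[of "Q S'" R] card_mono[of "Q S" "Q S' \<union> R"] finite_subset[of _ "Q S"]
      by (simp add: finite_Un)
    then have "card (Q S') + (n - 1) \<le> card (Q S)" using \<open>card R = n - 1\<close> by simp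
    moreover have "(Suc n - 1) * (Suc n - 2) = (n - 1) * (n - 2) + 2 * (n - 1)"
      using False by (cases n; cases "n - 1") (auto simp: algebra_simps)
    ultimately show ?thesis using IH Suc.hyps(2) unfolding Q_def by simp
  qed
qed

lemma card_ordered_pairs_ge:
  fixes M :: "'a set" and \<tau> :: "'a \<Rightarrow> 'b::linorder"
  assumes "finite M" "inj_on \<tau> M"
  shows "card M * card M - card M \<le> 2 * card {(f, g) \<in> M \<times> M. \<tau> f < \<tau> g}"
proof -
  define P where "P = {(f, g) \<in> M \<times> M. \<tau> f < \<tau> g}"
  have "finite P" unfolding P_def using assms(1) by (auto intro: finite_subset[of _ "M \<times> M"])
  have "M \<times> M \<subseteq> P \<union> prod.swap ` P \<union> (\<lambda>f. (f, f)) ` M"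
  proof
    fix p assume "p \<in> M \<times> M"
    then obtain f g where fg: "p = (f, g)" "f \<in> M" "g \<in> M" by auto
    then have "f = g \<or> \<tau> f < \<tau> g \<or> \<tau> g < \<tau> f"
      using inj_onD[OF assms(2)] by (cases "\<tau> f" "\<tau> g" rule: linorder_cases) auto
    then show "p \<in> P \<union> prod.swap ` P \<union> (\<lambda>f. (f, f)) ` M"
      unfolding P_def using fg by (auto simp: image_iff)
  qed
  then have "card (M \<times> M) \<le> card (P \<union> prod.swap ` P \<union> (\<lambda>f. (f, f)) ` M)"
    using \<open>finite P\<close> assms(1) by (intro card_mono) auto
  also have "\<dots> \<le> card (P \<union> prod.swap ` P) + card ((\<lambda>f. (f, f)) ` M)" by (rule card_Un_le)
  also have "\<dots> \<le> card P + card (prod.swap ` P) + card ((\<lambda>f. (f, f)) ` M)"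
    using card_Un_le[of P "prod.swap ` P"] by linarith
  also have "\<dots> \<le> card P + card P + card M"
    using card_image_le[OF \<open>finite P\<close>, of prod.swap] card_image_le[OF assms(1), of "\<lambda>f. (f, f)"] by linarith
  finally show ?thesis unfolding P_def by (simp add: card_cartesian_product)
qed

lemma mult_le_falling_products_sum:
  fixes l r :: nat
  shows "l * r \<le> (l - 1) * (l - 2) + (r - 1) * (r - 2) + 5"
proof (cases "l = 0 \<or> r = 0")
  case True
  then show ?thesis by auto
next
  case False
  have falling: "real ((n - 1) * (n - 2)) = (real n - 1) * (real n - 2)" if "n \<noteq> 0" for n :: nat
    using that by (cases "n = 1") (simp_all add: of_nat_diff)
  have fl: "real ((l - 1) * (l - 2)) = (real l - 1) * (real l - 2)"
    and fr: "real ((r - 1) * (r - 2)) = (real r - 1) * (real r - 2)"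
    using False by (simp_all only: falling de_Morgan_disj not_False_eq_True)
  have "real l * real r \<le> (real l - 1) * (real l - 2) + (real r - 1) * (real r - 2) + 5"
  proof -
    have "(real l - 1) * (real l - 2) + (real r - 1) * (real r - 2) + 5 - real l * real r
        = ((real l - real r)\<^sup>2 + (real l - 3)\<^sup>2 + (real r - 3)\<^sup>2) / 2"
      by (simp add: power2_eq_square field_simps)
    moreover have "0 \<le> ((real l - real r)\<^sup>2 + (real l - 3)\<^sup>2 + (real r - 3)\<^sup>2) / 2" by simp
    ultimately show ?thesis by linarith
  qed
  also have "\<dots> = real ((l - 1) * (l - 2) + (r - 1) * (r - 2) + 5)"
    by (simp only: of_nat_add of_nat_numeral fl fr)
  finally show ?thesis by (simp only: of_nat_mult [symmetric] of_nat_le_iff)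
qed

lemma quadratic_bound_from_linear_bounds:
  fixes k m G B :: nat
  assumes "k \<le> 4 * m + 1" "B \<le> 4 * m + 1" "m * m - m \<le> 6 * G + 10 * B" "2000 \<le> k"
  shows "(real k)\<^sup>2 / 2000 \<le> real G"
proof -
  have "m * m \<le> 6 * G + 10 * B + m" using assms(3) by linarith
  then have "real (m * m) \<le> real (6 * G + 10 * B + m)" by (simp only: of_nat_le_iff)
  moreover have "real B \<le> 4 * real m + 1" "real k \<le> 4 * real m + 1" "500 \<le> real m"
    using assms(1,2,4) by simp_all
  moreover define x where "x = real m"
  ultimately have "x * x \<le> 6 * real G + 10 * real B + x" "real B \<le> 4 * x + 1" "real k \<le> 4 * x + 1" "500 \<le> x"
    by simp_all
  define X where "X = x * x"
  have "500 * x \<le> X" unfolding X_def using \<open>500 \<le> x\<close> by (intro mult_right_mono) auto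
  have "(real k)\<^sup>2 \<le> (4 * x + 1)\<^sup>2" using \<open>real k \<le> 4 * x + 1\<close> by (intro power_mono) auto
  also have "\<dots> = 16 * X + 8 * x + 1" unfolding X_def by (simp add: power2_eq_square algebra_simps)
  finally have "(real k)\<^sup>2 \<le> 16 * X + 8 * x + 1" .
  moreover have "X \<le> 6 * real G + 10 * real B + x" unfolding X_def by fact
  ultimately show ?thesis using \<open>500 * x \<le> X\<close> \<open>500 \<le> x\<close> \<open>real B \<le> 4 * x + 1\<close> by linarith
qed

section \<open>Square roots of quadratics\<close>

lemma quadratic_eq_zero_if_three_roots:
  fixes \<alpha> \<beta> \<gamma> :: real
  assumes roots: "\<And>t. t \<in> {t1, t2, t3} \<Longrightarrow> \<alpha> * t\<^sup>2 + \<beta> * t + \<gamma> = 0"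
    and distinct: "t1 \<noteq> t2" "t1 \<noteq> t3" "t2 \<noteq> t3"
  shows "\<alpha> = 0 \<and> \<beta> = 0 \<and> \<gamma> = 0"
proof -
  have factor: "(x - y) * (\<alpha> * (x + y) + \<beta>) = (\<alpha> * x\<^sup>2 + \<beta> * x + \<gamma>) - (\<alpha> * y\<^sup>2 + \<beta> * y + \<gamma>)" for x y
    by (simp add: power2_eq_square algebra_simps)
  have "\<alpha> * (t1 + t2) + \<beta> = 0" "\<alpha> * (t1 + t3) + \<beta> = 0"
    using factor[of t1 t2] factor[of t1 t3] roots distinct by simp_all
  moreover have "\<alpha> * (t2 - t3) = (\<alpha> * (t1 + t2) + \<beta>) - (\<alpha> * (t1 + t3) + \<beta>)"
    by (simp add: algebra_simps)
  ultimately have "\<alpha> * (t2 - t3) = 0" by simp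
  then have "\<alpha> = 0" using distinct by simp
  then show ?thesis using \<open>\<alpha> * (t1 + t2) + \<beta> = 0\<close> roots[of t1] by simp
qed

lemma quadratic_eq_square_if_local_min_root:
  fixes \<alpha> \<beta> \<gamma> z r :: real
  assumes "r > 0" and nonneg: "\<And>t. \<bar>t - z\<bar> < r \<Longrightarrow> \<alpha> * t\<^sup>2 + \<beta> * t + \<gamma> \<ge> 0"
    and root: "\<alpha> * z\<^sup>2 + \<beta> * z + \<gamma> = 0"
  shows "\<alpha> * t\<^sup>2 + \<beta> * t + \<gamma> = \<alpha> * (t - z)\<^sup>2"
proof -
  have "2 * \<alpha> * z + \<beta> = 0"
  proof (rule DERIV_local_min[OF _ \<open>r > 0\<close>])
    show "((\<lambda>t. \<alpha> * t\<^sup>2 + \<beta> * t + \<gamma>) has_real_derivative 2 * \<alpha> * z + \<beta>) (at z)"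
      by (auto intro!: derivative_eq_intros)
    show "\<forall>t. \<bar>z - t\<bar> < r \<longrightarrow> \<alpha> * z\<^sup>2 + \<beta> * z + \<gamma> \<le> \<alpha> * t\<^sup>2 + \<beta> * t + \<gamma>"
      using nonneg root by (simp add: abs_minus_commute)
  qed
  then have "\<beta> = - 2 * \<alpha> * z" by simp
  moreover from this have "\<gamma> = \<alpha> * z\<^sup>2" using root by (simp add: power2_eq_square algebra_simps)
  ultimately show ?thesis by (simp add: power2_eq_square algebra_simps)
qed

lemma sqrt_quadratic_on_square:
  assumes "sqrt_quadratic_on J f"
  shows "\<exists>a b c. \<forall>t\<in>J. 0 \<le> f t \<and> (f t)\<^sup>2 = a * t\<^sup>2 + b * t + c"
proof -
  obtain a b c where "\<forall>t\<in>J. a * t\<^sup>2 + b * t + c \<ge> 0 \<and> f t = sqrt (a * t\<^sup>2 + b * t + c)"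
    using assms unfolding sqrt_quadratic_on_def by blast
  then show ?thesis by (intro exI[of _ a] exI[of _ b] exI[of _ c]) auto
qed

lemma sqrt_quadratic_on_continuous:
  assumes "sqrt_quadratic_on J f" shows "continuous_on J f"
proof -
  obtain a b c where f: "\<forall>t\<in>J. f t = sqrt (a * t\<^sup>2 + b * t + c)"
    using assms unfolding sqrt_quadratic_on_def by blast
  have "continuous_on J (\<lambda>t. sqrt (a * t\<^sup>2 + b * t + c))" by (intro continuous_intros)
  then show ?thesis by (rule continuous_on_eq) (use f in simp)
qed

lemma sqrt_quadratic_agree_at_most_twice:
  assumes f: "sqrt_quadratic_on J f" and g: "sqrt_quadratic_on J g" and "\<exists>t\<in>J. f t \<noteq> g t"
  shows "finite {t\<in>J. f t = g t} \<and> card {t\<in>J. f t = g t} \<le> 2"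
proof (rule ccontr)
  define S where "S = {t\<in>J. f t = g t}"
  obtain a b c where fq: "\<forall>t\<in>J. 0 \<le> f t \<and> (f t)\<^sup>2 = a * t\<^sup>2 + b * t + c"
    using sqrt_quadratic_on_square[OF f] by blast
  obtain a' b' c' where gq: "\<forall>t\<in>J. 0 \<le> g t \<and> (g t)\<^sup>2 = a' * t\<^sup>2 + b' * t + c'"
    using sqrt_quadratic_on_square[OF g] by blast
  assume many: "\<not> (finite {t\<in>J. f t = g t} \<and> card {t\<in>J. f t = g t} \<le> 2)"
  have "\<exists>T\<subseteq>S. card T = 3"
  proof (cases "finite S")
    case True
    then have "3 \<le> card S" using many unfolding S_def by simp
    then show ?thesis using obtain_subset_with_card_n[of 3 S] by metis
  next
    case False
    then show ?thesis using infinite_arbitrarily_large[of S 3] by blast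
  qed
  then obtain T where "T \<subseteq> S" "card T = 3" by blast
  then obtain t1 t2 t3 where "{t1, t2, t3} \<subseteq> S" and distinct: "t1 \<noteq> t2" "t1 \<noteq> t3" "t2 \<noteq> t3"
    unfolding card_3_iff by blast
  moreover have root: "(a - a') * t\<^sup>2 + (b - b') * t + (c - c') = 0" if "t \<in> S" for t
    using that fq gq unfolding S_def by (auto simp: algebra_simps)
  ultimately have "(a - a') * t\<^sup>2 + (b - b') * t + (c - c') = 0" if "t \<in> {t1, t2, t3}" for t
    using that by (intro root) auto
  then have "a - a' = 0 \<and> b - b' = 0 \<and> c - c' = 0"
    by (rule quadratic_eq_zero_if_three_roots[OF _ distinct])
  then have "f t = g t" if "t \<in> J" for t
    using fq gq that power2_eq_iff_nonneg[of "f t" "g t"] by auto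
  then show False using assms(3) by blast
qed

lemma sqrt_quadratic_tangent:
  assumes h: "sqrt_quadratic_on J h" and y: "sqrt_quadratic_on J y" and "r > 0"
    and below: "\<And>t. \<bar>t - z\<bar> < r \<Longrightarrow> t \<in> J \<and> y t \<le> h t" and touch: "h z = y z"
  shows "\<exists>A. \<forall>t\<in>J. (h t)\<^sup>2 - (y t)\<^sup>2 = A * (t - z)\<^sup>2"
proof -
  obtain a b c where hq: "\<forall>t\<in>J. 0 \<le> h t \<and> (h t)\<^sup>2 = a * t\<^sup>2 + b * t + c"
    using sqrt_quadratic_on_square[OF h] by blast
  obtain a' b' c' where yq: "\<forall>t\<in>J. 0 \<le> y t \<and> (y t)\<^sup>2 = a' * t\<^sup>2 + b' * t + c'"
    using sqrt_quadratic_on_square[OF y] by blast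
  have diff: "(h t)\<^sup>2 - (y t)\<^sup>2 = (a - a') * t\<^sup>2 + (b - b') * t + (c - c')" if "t \<in> J" for t
    using hq yq that by (simp add: algebra_simps)
  have "z \<in> J" using below \<open>r > 0\<close> by simp
  have "(a - a') * t\<^sup>2 + (b - b') * t + (c - c') = (a - a') * (t - z)\<^sup>2" for t
  proof (rule quadratic_eq_square_if_local_min_root[OF \<open>r > 0\<close>])
    fix t assume "\<bar>t - z\<bar> < r"
    then have "t \<in> J" "y t \<le> h t" using below by auto
    moreover have "0 \<le> y t" using yq \<open>t \<in> J\<close> by blast
    ultimately have "(y t)\<^sup>2 \<le> (h t)\<^sup>2" by (simp add: power_mono)
    then show "(a - a') * t\<^sup>2 + (b - b') * t + (c - c') \<ge> 0" using diff[OF \<open>t \<in> J\<close>] by simp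
  next
    show "(a - a') * z\<^sup>2 + (b - b') * z + (c - c') = 0" using diff[OF \<open>z \<in> J\<close>] touch by simp
  qed
  then show ?thesis using diff by auto
qed

section \<open>Lower envelopes of functions meeting at most twice\<close>

lemma exists_between_notin_finite:
  fixes a b :: real
  assumes "finite T" "a < b"
  obtains t where "a < t" "t < b" "t \<notin> T"
proof -
  have "\<not> {a<..<b} \<subseteq> T" using assms finite_subset[of "{a<..<b}" T] infinite_Ioo by blast
  then show ?thesis using that by (meson greaterThanLessThan_iff subsetI)
qed

locale envelope_family =
  fixes J :: "real set" and F :: "(real \<Rightarrow> real) set"
  assumes interval: "is_interval J" and finite_F: "finite F" and nonempty: "F \<noteq> {}"
    and continuous: "\<And>f. f \<in> F \<Longrightarrow> continuous_on J f"
    and agree_at_most_twice: "\<And>f g. f \<in> F \<Longrightarrow> g \<in> F \<Longrightarrow> f \<noteq> g \<Longrightarrow>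
      finite {t\<in>J. f t = g t} \<and> card {t\<in>J. f t = g t} \<le> 2"
begin

abbreviation L :: "real \<Rightarrow> real" where "L \<equiv> lower_env F"

lemma in_J_between: "a \<in> J \<Longrightarrow> b \<in> J \<Longrightarrow> a \<le> x \<Longrightarrow> x \<le> b \<Longrightarrow> x \<in> J"
  using interval unfolding is_interval_1 by blast

lemma no_three_common_points:
  assumes "f \<in> F" "g \<in> F" "f \<noteq> g" and "{t1, t2, t3} \<subseteq> J"
    and "t1 \<noteq> t2" "t1 \<noteq> t3" "t2 \<noteq> t3" and "f t1 = g t1" "f t2 = g t2" "f t3 = g t3"
  shows False
proof -
  have "{t1, t2, t3} \<subseteq> {t\<in>J. f t = g t}" using assms by auto
  moreover have "finite {t\<in>J. f t = g t}" "card {t\<in>J. f t = g t} \<le> 2"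
    using agree_at_most_twice[OF assms(1-3)] by auto
  ultimately have "card {t1, t2, t3} \<le> 2" by (meson card_mono le_trans)
  then show False using assms(5-7) by simp
qed

lemma lower_env_le: "f \<in> F \<Longrightarrow> L t \<le> f t"
  unfolding lower_env_def using finite_F by (intro Min_le) auto

lemma lower_env_attained: "\<exists>f\<in>F. f t = L t"
proof -
  have "Min ((\<lambda>f. f t) ` F) \<in> (\<lambda>f. f t) ` F" using finite_F nonempty by simp
  then show ?thesis unfolding lower_env_def by auto
qed

lemma crossing_between:
  assumes "f \<in> F" "g \<in> F" "a \<in> J" "b \<in> J" "a \<le> b" and "f a \<le> g a" "g b \<le> f b"
  shows "\<exists>z. a \<le> z \<and> z \<le> b \<and> f z = g z"
proof -
  have "{a..b} \<subseteq> J" using in_J_between[OF assms(3,4)] by auto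
  moreover have "continuous_on J (\<lambda>t. f t - g t)"
    using continuous[OF assms(1)] continuous[OF assms(2)] by (intro continuous_intros)
  ultimately have "continuous_on {a..b} (\<lambda>t. f t - g t)" by (rule continuous_on_subset[rotated])
  then have "\<exists>z. a \<le> z \<and> z \<le> b \<and> f z - g z = 0"
    using IVT'[of "\<lambda>t. f t - g t" a 0 b] assms(5-7) by simp
  then show ?thesis by auto
qed

lemma strict_crossing_between:
  assumes "f \<in> F" "g \<in> F" "a \<in> J" "b \<in> J" "a \<le> b" and "f a < g a" "g b < f b"
  shows "\<exists>z. a < z \<and> z < b \<and> f z = g z"
proof -
  obtain z where "a \<le> z" "z \<le> b" "f z = g z" using crossing_between assms by force
  moreover have "z \<noteq> a" "z \<noteq> b" using calculation assms(6,7) by auto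
  ultimately show ?thesis by force
qed

lemma le_if_le_arbitrarily_close:
  assumes "f \<in> F" "g \<in> F" "a \<in> J" and close: "\<And>\<delta>. \<delta> > 0 \<Longrightarrow> \<exists>t\<in>J. \<bar>t - a\<bar> < \<delta> \<and> f t \<le> g t"
  shows "f a \<le> g a"
proof (rule ccontr)
  assume "\<not> f a \<le> g a"
  have "continuous_on J (\<lambda>t. f t - g t)"
    using continuous assms(1,2) by (intro continuous_intros)
  moreover have "f a - g a > 0" using \<open>\<not> f a \<le> g a\<close> by simp
  ultimately obtain \<delta> where "\<delta> > 0" and \<delta>: "\<forall>t\<in>J. dist t a < \<delta> \<longrightarrow> dist (f t - g t) (f a - g a) < f a - g a"
    using \<open>a \<in> J\<close> unfolding continuous_on_iff by blast
  obtain t where "t \<in> J" "\<bar>t - a\<bar> < \<delta>" "f t \<le> g t" using close \<open>\<delta> > 0\<close> by blast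
  then show False using \<delta> by (auto simp: dist_real_def abs_less_iff)
qed

definition crossings :: "real set" where
  "crossings = {t\<in>J. \<exists>f\<in>F. \<exists>g\<in>F. f \<noteq> g \<and> f t = g t}"

lemma finite_crossings: "finite crossings"
proof -
  have "crossings \<subseteq> (\<Union>p\<in>{p\<in>F \<times> F. fst p \<noteq> snd p}. {t\<in>J. fst p t = snd p t})"
    unfolding crossings_def by auto
  moreover have "finite {p\<in>F \<times> F. fst p \<noteq> snd p}" using finite_F by auto
  ultimately show ?thesis using agree_at_most_twice by (auto intro: finite_subset)
qed

definition regular :: "real set" where
  "regular = J - crossings"

definition active :: "real \<Rightarrow> real \<Rightarrow> real" where
  "active t = (THE f. f \<in> F \<and> f t = L t)"

lemma regular_in_J: "t \<in> regular \<Longrightarrow> t \<in> J"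
  unfolding regular_def by simp

lemma unique_on_env_at_regular:
  assumes "t \<in> regular" shows "\<exists>!f. f \<in> F \<and> f t = L t"
proof -
  obtain f where "f \<in> F" "f t = L t" using lower_env_attained by blast
  moreover have "g = f" if "g \<in> F" "g t = L t" for g
  proof (rule ccontr)
    assume "g \<noteq> f"
    moreover have "t \<in> J" using assms unfolding regular_def by simp
    moreover have "\<exists>f'\<in>F. \<exists>g'\<in>F. f' \<noteq> g' \<and> f' t = g' t"
      using \<open>f \<in> F\<close> that \<open>f t = L t\<close> \<open>g \<noteq> f\<close> by (intro bexI[of _ f] bexI[of _ g]) auto
    ultimately have "t \<in> crossings" unfolding crossings_def by simp
    then show False using assms unfolding regular_def by simp
  qed
  ultimately show ?thesis by blast
qed

lemma
  assumes "t \<in> regular"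
  shows active_in_F: "active t \<in> F" and active_on_env: "active t t = L t"
    and active_unique: "\<And>g. g \<in> F \<Longrightarrow> g t = L t \<Longrightarrow> g = active t"
proof -
  note unique = unique_on_env_at_regular[OF assms]
  show "active t \<in> F" "active t t = L t" using theI'[OF unique] unfolding active_def by simp_all
  show "\<And>g. g \<in> F \<Longrightarrow> g t = L t \<Longrightarrow> g = active t"
    using the1_equality[OF unique] unfolding active_def by simp
qed

lemma active_below:
  assumes "t \<in> regular" "g \<in> F" "g \<noteq> active t" shows "active t t < g t"
proof -
  have "g t \<noteq> L t" using active_unique assms by blast
  then show ?thesis using active_on_env[OF assms(1)] lower_env_le[OF assms(2), of t] by simp
qed

lemma single_active_between:
  assumes "a \<in> J" "b \<in> J" "a < b" and no_crossing: "\<And>t. a < t \<Longrightarrow> t < b \<Longrightarrow> t \<notin> crossings"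
  shows "\<exists>y\<in>F. \<forall>t. a \<le> t \<and> t \<le> b \<longrightarrow> y t = L t"
proof -
  have regular: "t \<in> regular" if "a < t" "t < b" for t
    using no_crossing[OF that] in_J_between[OF assms(1,2), of t] that unfolding regular_def by auto
  define c where "c = (a + b) / 2"
  have c: "a < c" "c < b" using assms(3) unfolding c_def by auto
  define y where "y = active c"
  have "y \<in> F" unfolding y_def using active_in_F regular c by blast
  text \<open>Two different active functions in \<open>(a, b)\<close> would cross between their points of activity.\<close>
  have active_eq: "active t = y" if t: "a < t" "t < b" for t
  proof (rule ccontr)
    assume ne: "active t \<noteq> y"
    have "active t \<in> F" "t \<in> J" "c \<in> J" using active_in_F regular regular_in_J c t by blast+
    moreover have "active t t < y t" "y c < active t c"
      using active_below regular t c ne \<open>y \<in> F\<close> \<open>active t \<in> F\<close> unfolding y_def by auto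
    moreover have "t \<noteq> c" using ne unfolding y_def by auto
    ultimately obtain z where "min t c < z" "z < max t c" "active t z = y z"
      using strict_crossing_between[of "active t" y t c] strict_crossing_between[of y "active t" c t]
        \<open>y \<in> F\<close> by (cases "t < c") (force simp: min_def max_def)+
    moreover have "z \<in> J" using calculation in_J_between[OF assms(1,2), of z] t c by auto
    ultimately have "z \<in> crossings"
      unfolding crossings_def using ne \<open>y \<in> F\<close> \<open>active t \<in> F\<close> by blast
    then show False using no_crossing[of z] \<open>min t c < z\<close> \<open>z < max t c\<close> t c by auto
  qed
  have inside: "y t = L t" if "a < t" "t < b" for t
    using active_on_env[OF regular[OF that]] active_eq[OF that] by simp
  have endpoint: "y e = L e" if "e \<in> {a, b}" for e
  proof -
    obtain g where "g \<in> F" "g e = L e" using lower_env_attained by blast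
    have "y e \<le> g e"
    proof (rule le_if_le_arbitrarily_close[OF \<open>y \<in> F\<close> \<open>g \<in> F\<close>])
      show "e \<in> J" using that assms by auto
      fix \<delta> :: real assume "\<delta> > 0"
      define \<mu> where "\<mu> = min \<delta> (b - a) / 2"
      have \<mu>: "0 < \<mu>" "\<mu> < \<delta>" "\<mu> < b - a" using \<open>\<delta> > 0\<close> assms(3) unfolding \<mu>_def by auto
      define t where "t = (if e = a then a + \<mu> else b - \<mu>)"
      have "a < t" "t < b" "\<bar>t - e\<bar> < \<delta>" using \<mu> that unfolding t_def by auto
      moreover have "t \<in> J" using regular_in_J regular calculation by blast
      ultimately show "\<exists>t\<in>J. \<bar>t - e\<bar> < \<delta> \<and> y t \<le> g t"
        using inside lower_env_le[OF \<open>g \<in> F\<close>, of t] by auto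
    qed
    then show ?thesis using \<open>g e = L e\<close> lower_env_le[OF \<open>y \<in> F\<close>, of e] by simp
  qed
  have "y t = L t" if "a \<le> t" "t \<le> b" for t
    using that inside endpoint by (cases "t = a \<or> t = b") auto
  then show ?thesis using \<open>y \<in> F\<close> by blast
qed

lemma abab_free_active: "abab_free regular active"
  unfolding abab_free_def
proof (intro ballI impI)
  fix p1 p2 p3 p4
  assume p: "p1 \<in> regular" "p2 \<in> regular" "p3 \<in> regular" "p4 \<in> regular" "p1 < p2" "p2 < p3" "p3 < p4"
    and same: "active p1 = active p3" "active p2 = active p4"
  show "active p1 = active p2"
  proof (rule ccontr)
    assume ne: "active p1 \<noteq> active p2"
    define f g where "f = active p1" and "g = active p2"
    have "f \<in> F" "g \<in> F" "f \<noteq> g" using active_in_F p ne unfolding f_def g_def by auto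
    have J: "p1 \<in> J" "p2 \<in> J" "p3 \<in> J" "p4 \<in> J" using p regular_in_J by auto
    have "f p1 < g p1" "g p2 < f p2" "f p3 < g p3" "g p4 < f p4"
      using active_below[OF p(1) \<open>g \<in> F\<close>] active_below[OF p(2) \<open>f \<in> F\<close>]
        active_below[OF p(3) \<open>g \<in> F\<close>] active_below[OF p(4) \<open>f \<in> F\<close>] \<open>f \<noteq> g\<close> same
      unfolding f_def g_def by auto
    then obtain z1 z2 z3 where "p1 < z1" "z1 < p2" "p2 < z2" "z2 < p3" "p3 < z3" "z3 < p4"
      and "f z1 = g z1" "f z2 = g z2" "f z3 = g z3"
      using strict_crossing_between[OF \<open>f \<in> F\<close> \<open>g \<in> F\<close> J(1,2) less_imp_le[OF p(5)]]
        strict_crossing_between[OF \<open>g \<in> F\<close> \<open>f \<in> F\<close> J(2,3) less_imp_le[OF p(6)]]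
        strict_crossing_between[OF \<open>f \<in> F\<close> \<open>g \<in> F\<close> J(3,4) less_imp_le[OF p(7)]]
      by auto
    moreover have "{z1, z2, z3} \<subseteq> J" using calculation in_J_between[OF J(1,4)] p by auto
    ultimately show False
      using no_three_common_points[OF \<open>f \<in> F\<close> \<open>g \<in> F\<close> \<open>f \<noteq> g\<close>, of z1 z2 z3] by auto
  qed
qed

definition breakpoints :: "real set" where
  "breakpoints = {z\<in>J. (\<exists>a\<in>J. \<exists>b\<in>J. a < z \<and> z < b) \<and>
     \<not> (\<exists>y\<in>F. \<exists>\<epsilon>>0. \<forall>t\<in>J. \<bar>t - z\<bar> < \<epsilon> \<longrightarrow> y t = L t)}"

lemma not_breakpoint_if_on_env_around:
  assumes "y \<in> F" "a < z" "z < b" and on_env: "\<And>t. a \<le> t \<Longrightarrow> t \<le> b \<Longrightarrow> y t = L t"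
  shows "z \<notin> breakpoints"
proof -
  have "\<exists>\<epsilon>>0. \<forall>t\<in>J. \<bar>t - z\<bar> < \<epsilon> \<longrightarrow> y t = L t"
    by (rule exI[of _ "min (z - a) (b - z)"]) (use assms in \<open>auto simp: abs_less_iff\<close>)
  then show ?thesis using assms(1) unfolding breakpoints_def by blast
qed

lemma regular_right_of:
  assumes "z \<in> J" "b \<in> J" "z < b"
  shows "\<exists>v. v \<in> regular \<and> z < v \<and> (\<forall>t. z < t \<and> t \<le> v \<longrightarrow> t \<notin> crossings)"
proof -
  obtain \<epsilon> where "\<epsilon> > 0" and \<epsilon>: "\<forall>t\<in>crossings. t \<noteq> z \<longrightarrow> \<epsilon> \<le> dist z t"
    using finite_set_avoid[OF finite_crossings] by blast
  define v where "v = min b (z + \<epsilon> / 2)"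
  have v: "z < v" "v \<le> b" "v \<le> z + \<epsilon> / 2" unfolding v_def using assms \<open>\<epsilon> > 0\<close> by auto
  have no_crossing: "t \<notin> crossings" if "z < t" "t \<le> v" for t
    using \<epsilon> that v \<open>\<epsilon> > 0\<close> by (force simp: dist_real_def)
  have "v \<in> J" using in_J_between[OF assms(1,2)] v by simp
  then have "v \<in> regular" using no_crossing[of v] v unfolding regular_def by simp
  then show ?thesis using v no_crossing by blast
qed

lemma regular_left_of:
  assumes "z \<in> J" "a \<in> J" "a < z"
  shows "\<exists>v. v \<in> regular \<and> a < v \<and> v < z \<and> (\<forall>t. v \<le> t \<and> t < z \<longrightarrow> t \<notin> crossings)"
proof -
  obtain \<epsilon> where "\<epsilon> > 0" and \<epsilon>: "\<forall>t\<in>crossings. t \<noteq> z \<longrightarrow> \<epsilon> \<le> dist z t"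
    using finite_set_avoid[OF finite_crossings] by blast
  define v where "v = max ((a + z) / 2) (z - \<epsilon> / 2)"
  have "a < (a + z) / 2" "(a + z) / 2 < z" using assms by auto
  then have v: "v < z" "a < v" "z - \<epsilon> / 2 \<le> v" unfolding v_def using \<open>\<epsilon> > 0\<close> by (auto simp: max_def)
  have no_crossing: "t \<notin> crossings" if "v \<le> t" "t < z" for t
    using \<epsilon> that v \<open>\<epsilon> > 0\<close> by (force simp: dist_real_def)
  have "v \<in> J" using in_J_between[OF assms(2,1)] v by simp
  then have "v \<in> regular" using no_crossing[of v] v unfolding regular_def by simp
  then show ?thesis using v no_crossing by blast
qed

lemma breakpoints_subset_crossings: "breakpoints \<subseteq> crossings"
proof
  fix z assume z: "z \<in> breakpoints"
  then obtain a b where "a \<in> J" "b \<in> J" "a < z" "z < b" "z \<in> J" unfolding breakpoints_def by blast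
  obtain v where v: "v \<in> regular" "a < v" "v < z" "\<forall>t. v \<le> t \<and> t < z \<longrightarrow> t \<notin> crossings"
    using regular_left_of[OF \<open>z \<in> J\<close> \<open>a \<in> J\<close> \<open>a < z\<close>] by blast
  obtain w where w: "w \<in> regular" "z < w" "\<forall>t. z < t \<and> t \<le> w \<longrightarrow> t \<notin> crossings"
    using regular_right_of[OF \<open>z \<in> J\<close> \<open>b \<in> J\<close> \<open>z < b\<close>] by blast
  show "z \<in> crossings"
  proof (rule ccontr)
    assume "z \<notin> crossings"
    then have free: "t \<notin> crossings" if "v < t" "t < w" for t
      using v(4) w(3) that by (cases t z rule: linorder_cases) auto
    have "v < w" using v(3) w(2) by simp
    obtain y where "y \<in> F" "\<forall>t. v \<le> t \<and> t \<le> w \<longrightarrow> y t = L t"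
      using single_active_between[OF regular_in_J[OF v(1)] regular_in_J[OF w(1)] \<open>v < w\<close> free] by blast
    then have "z \<notin> breakpoints" using not_breakpoint_if_on_env_around[of y v z w] v(3) w(2) by blast
    then show False using z by simp
  qed
qed

lemma finite_breakpoints: "finite breakpoints"
  using finite_subset[OF breakpoints_subset_crossings finite_crossings] .

lemma finite_active_funs: "finite (active ` regular)"
  using finite_subset[OF _ finite_F] active_in_F by blast

text \<open>If the regular point \<open>s\<close> just left of \<open>z\<close> had the same active function as \<open>p'\<close>, that
  function would form the envelope on both sides of \<open>z\<close>.\<close>
lemma active_changes_across_breakpoint:
  assumes "z \<in> breakpoints" "p \<in> regular" "p' \<in> regular" "p < z" "z < p'"
    and free: "\<And>t. z < t \<Longrightarrow> t < p' \<Longrightarrow> t \<notin> crossings" and same: "active p = active p'"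
  shows "\<exists>s\<in>regular. p < s \<and> s < p' \<and> active s \<noteq> active p"
proof -
  have "z \<in> J" using assms(1) unfolding breakpoints_def by simp
  obtain s where s: "s \<in> regular" "p < s" "s < z" "\<forall>t. s \<le> t \<and> t < z \<longrightarrow> t \<notin> crossings"
    using regular_left_of[OF \<open>z \<in> J\<close> regular_in_J[OF assms(2)] \<open>p < z\<close>] by blast
  have "active s \<noteq> active p"
  proof
    assume "active s = active p"
    have free_left: "t \<notin> crossings" if "s < t" "t < z" for t using s(4) that by simp
    obtain y1 where y1: "y1 \<in> F" "\<forall>t. s \<le> t \<and> t \<le> z \<longrightarrow> y1 t = L t"
      using single_active_between[OF regular_in_J[OF s(1)] \<open>z \<in> J\<close> s(3) free_left] by blast
    obtain y2 where y2: "y2 \<in> F" "\<forall>t. z \<le> t \<and> t \<le> p' \<longrightarrow> y2 t = L t"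
      using single_active_between[OF \<open>z \<in> J\<close> regular_in_J[OF assms(3)] \<open>z < p'\<close> free] by blast
    have "y1 = active s" using active_unique[OF s(1) y1(1)] y1(2)[rule_format, of s] s(3) by simp
    moreover have "y2 = active p'"
      using active_unique[OF assms(3) y2(1)] y2(2)[rule_format, of p'] \<open>z < p'\<close> by simp
    ultimately have "y1 = y2" using \<open>active s = active p\<close> same by simp
    then have "y1 t = L t" if "s \<le> t" "t \<le> p'" for t
      using y1(2) y2(2) that by (cases "t \<le> z") auto
    then have "z \<notin> breakpoints"
      using not_breakpoint_if_on_env_around[OF y1(1) s(3) \<open>z < p'\<close>] by blast
    then show False using assms(1) by simp
  qed
  then show ?thesis using s \<open>z < p'\<close> by auto
qed

text \<open>Breakpoints are crossings, so each can be sent to a regular point just to its right, before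
  the next crossing; the counting lemma for \<open>abab\<close>-free labellings applies to these points.\<close>
lemma card_breakpoints_le: "card breakpoints \<le> 4 * card (active ` regular) + 1"
proof -
  define v where "v z = (SOME v. v \<in> regular \<and> z < v \<and> (\<forall>t. z < t \<and> t \<le> v \<longrightarrow> t \<notin> crossings))" for z
  have v: "v z \<in> regular \<and> z < v z \<and> (\<forall>t. z < t \<and> t \<le> v z \<longrightarrow> t \<notin> crossings)"
    if z: "z \<in> breakpoints" for z
  proof -
    obtain b where "b \<in> J" "z < b" "z \<in> J" using z unfolding breakpoints_def by blast
    then have "\<exists>v. v \<in> regular \<and> z < v \<and> (\<forall>t. z < t \<and> t \<le> v \<longrightarrow> t \<notin> crossings)"
      using regular_right_of by blast
    then show ?thesis unfolding v_def by (rule someI_ex)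
  qed
  have before_next: "v z1 < z2" if "z1 \<in> breakpoints" "z2 \<in> breakpoints" "z1 < z2" for z1 z2
  proof (rule ccontr)
    assume "\<not> v z1 < z2"
    then have "z2 \<notin> crossings" using v[OF that(1)] that(3) by simp
    then show False using breakpoints_subset_crossings that(2) by blast
  qed
  have "inj_on v breakpoints"
  proof (rule inj_onI)
    fix z1 z2 assume z: "z1 \<in> breakpoints" "z2 \<in> breakpoints" "v z1 = v z2"
    then have "\<not> z1 < z2" "\<not> z2 < z1" using before_next v by (metis less_asym)+
    then show "z1 = z2" by simp
  qed
  have "card (v ` breakpoints) \<le> 4 * card (active ` regular) + 1"
  proof (rule card_le_if_abab_free[OF _ _ finite_active_funs abab_free_active])
    show "finite (v ` breakpoints)" using finite_breakpoints by simp
    show "v ` breakpoints \<subseteq> regular" using v by auto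
    fix p p' assume pp: "p \<in> v ` breakpoints" "p' \<in> v ` breakpoints" "p < p'" "active p = active p'"
    obtain z1 z2 where z: "z1 \<in> breakpoints" "z2 \<in> breakpoints" "p = v z1" "p' = v z2"
      using pp(1,2) by auto
    have "z1 < z2"
    proof (cases z1 z2 rule: linorder_cases)
      case greater
      then show ?thesis using before_next[OF z(2,1)] v[OF z(1)] z(3,4) pp(3) by auto
    qed (use z pp(3) in auto)
    then have "p < z2" using before_next[OF z(1,2)] z(3) by simp
    moreover have "p \<in> regular" "p' \<in> regular" "z2 < p'" "\<forall>t. z2 < t \<and> t \<le> p' \<longrightarrow> t \<notin> crossings"
      using v z by auto
    ultimately show "\<exists>s\<in>regular. p < s \<and> s < p' \<and> active s \<noteq> active p"
      by (intro active_changes_across_breakpoint[OF z(2)]) (use pp(4) in auto)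
  qed
  then show ?thesis using card_image[OF \<open>inj_on v breakpoints\<close>] by simp
qed

definition max_pieces :: "real set set" where
  "max_pieces = {I. env_piece J F I \<and> (\<forall>I'. env_piece J F I' \<and> I \<subseteq> I' \<longrightarrow> I' = I)}"

lemma env_complexity_eq_card_max_pieces: "env_complexity J F = card max_pieces"
  unfolding env_complexity_def max_pieces_def ..

lemma active_on_piece:
  assumes "env_piece J F I" "p \<in> I" "p \<in> regular" "t \<in> I"
  shows "active p t = L t"
proof -
  obtain f where "f \<in> F" "\<forall>t\<in>I. f t = L t" using assms(1) unfolding env_piece_def by blast
  moreover have "f = active p" using active_unique[OF assms(3)] calculation assms(2) by simp
  ultimately show ?thesis using assms(4) by simp
qed

lemma max_pieces_eq_if_joined:
  assumes I: "I \<in> max_pieces" and I': "I' \<in> max_pieces"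
    and p: "p \<in> I" "p \<in> regular" and p': "p' \<in> I'" "p' \<in> regular"
    and "p \<le> p'" and same: "active p = active p'" and between: "\<And>t. p \<le> t \<Longrightarrow> t \<le> p' \<Longrightarrow> active p t = L t"
  shows "I = I'"
proof -
  define W where "W = I \<union> {p..p'} \<union> I'"
  have piece: "env_piece J F I" "env_piece J F I'" using I I' unfolding max_pieces_def by auto
  then have "connected I" "connected I'" unfolding env_piece_def is_interval_connected_1 by simp_all
  then have "connected (I \<union> {p..p'})"
    by (intro connected_Un connected_Icc) (use p \<open>p \<le> p'\<close> in auto)
  then have "connected W"
    unfolding W_def by (rule connected_Un[OF _ \<open>connected I'\<close>]) (use p' \<open>p \<le> p'\<close> in auto)
  have "p \<in> J" "p' \<in> J" using p p' regular_in_J by auto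
  then have "W \<subseteq> J" unfolding W_def using piece in_J_between[OF \<open>p \<in> J\<close> \<open>p' \<in> J\<close>]
    unfolding env_piece_def by auto
  moreover have "\<forall>t\<in>W. active p t = L t"
    unfolding W_def using active_on_piece[OF piece(1) p] active_on_piece[OF piece(2) p'] same between
    by auto
  ultimately have "env_piece J F W"
    unfolding env_piece_def using \<open>connected W\<close> active_in_F[OF p(2)] p(1)
    unfolding is_interval_connected_1 W_def by blast
  then have "W = I" "W = I'" using I I' unfolding max_pieces_def W_def by blast+
  then show ?thesis by simp
qed

lemma max_piece_nontrivial:
  assumes I: "I \<in> max_pieces" and "q1 \<in> J" "q2 \<in> J" "q1 \<noteq> q2"
  shows "\<exists>a\<in>I. \<exists>b\<in>I. a < b"
proof (rule ccontr)
  assume trivial: "\<not> (\<exists>a\<in>I. \<exists>b\<in>I. a < b)"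
  have piece: "env_piece J F I" using I unfolding max_pieces_def by auto
  then obtain p where "p \<in> I" unfolding env_piece_def by blast
  then have "I = {p}" using trivial by (auto simp: not_less order.antisym)
  have "p \<in> J" using piece \<open>p \<in> I\<close> unfolding env_piece_def by auto
  obtain q where "q \<in> J" "q \<noteq> p" using assms(2-4) by metis
  text \<open>The envelope is given by a single function on a nondegenerate interval next to \<open>p\<close>,
    which would extend the piece \<open>{p}\<close>.\<close>
  have "\<exists>v y. v \<noteq> p \<and> v \<in> J \<and> y \<in> F \<and> (\<forall>t. min p v \<le> t \<and> t \<le> max p v \<longrightarrow> y t = L t)"
  proof (cases "p < q")
    case True
    obtain v where v: "v \<in> regular" "p < v" "\<forall>t. p < t \<and> t \<le> v \<longrightarrow> t \<notin> crossings"
      using regular_right_of[OF \<open>p \<in> J\<close> \<open>q \<in> J\<close> True] by blast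
    then show ?thesis
      using single_active_between[OF \<open>p \<in> J\<close> regular_in_J[OF v(1)] v(2)] regular_in_J[OF v(1)]
      by (force simp: min_def max_def)
  next
    case False
    then have "q < p" using \<open>q \<noteq> p\<close> by simp
    obtain v where v: "v \<in> regular" "q < v" "v < p" "\<forall>t. v \<le> t \<and> t < p \<longrightarrow> t \<notin> crossings"
      using regular_left_of[OF \<open>p \<in> J\<close> \<open>q \<in> J\<close> \<open>q < p\<close>] by blast
    then show ?thesis
      using single_active_between[OF regular_in_J[OF v(1)] \<open>p \<in> J\<close> v(3)] regular_in_J[OF v(1)]
      by (force simp: min_def max_def)
  qed
  then obtain v y where v: "v \<noteq> p" "v \<in> J" "y \<in> F"
    and y: "\<forall>t. min p v \<le> t \<and> t \<le> max p v \<longrightarrow> y t = L t" by blast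
  have "env_piece J F {min p v..max p v}"
    unfolding env_piece_def
  proof (intro conjI)
    show "{min p v..max p v} \<subseteq> J"
      using in_J_between[of "min p v" "max p v"] \<open>p \<in> J\<close> v(2) by (auto simp: min_def max_def)
    show "\<exists>f\<in>F. \<forall>t\<in>{min p v..max p v}. f t = L t"
      using y by (intro bexI[OF _ v(3)] ballI) simp
  qed (simp_all add: is_interval_cc)
  then have "{min p v..max p v} = I" using I \<open>I = {p}\<close> unfolding max_pieces_def by auto
  then show False using \<open>I = {p}\<close> v(1) by (metis atLeastAtMost_iff max.cobounded2 min.cobounded2 singletonD)
qed

lemma active_changes_if_leaves_env:
  assumes "p \<in> regular" "p' \<in> regular" "p \<le> t" "t \<le> p'" and off: "active p t \<noteq> L t"
  shows "\<exists>s\<in>regular. p < s \<and> s < p' \<and> active s \<noteq> active p"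
proof -
  define f where "f = active p"
  have "f \<in> F" "p \<in> J" "p' \<in> J" using active_in_F assms(1,2) regular_in_J unfolding f_def by auto
  then have "t \<in> J" using in_J_between assms(3,4) by blast
  obtain g where "g \<in> F" "g t = L t" using lower_env_attained by blast
  then have "g t < f t" using off lower_env_le[OF \<open>f \<in> F\<close>, of t] unfolding f_def by simp
  have "p \<noteq> t" using off active_on_env[OF assms(1)] by auto
  text \<open>By continuity \<open>g < f\<close> near \<open>t\<close>, so \<open>f\<close> is not active at regular points there.\<close>
  have "\<exists>\<delta>>0. \<forall>x\<in>J. \<bar>x - t\<bar> < \<delta> \<longrightarrow> g x < f x"
  proof (rule ccontr)
    assume "\<not> (\<exists>\<delta>>0. \<forall>x\<in>J. \<bar>x - t\<bar> < \<delta> \<longrightarrow> g x < f x)"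
    then have "\<And>\<delta>. \<delta> > 0 \<Longrightarrow> \<exists>x\<in>J. \<bar>x - t\<bar> < \<delta> \<and> f x \<le> g x" by (meson not_less)
    then have "f t \<le> g t" by (rule le_if_le_arbitrarily_close[OF \<open>f \<in> F\<close> \<open>g \<in> F\<close> \<open>t \<in> J\<close>])
    then show False using \<open>g t < f t\<close> by simp
  qed
  then obtain \<delta> where "\<delta> > 0" and \<delta>: "\<forall>x\<in>J. \<bar>x - t\<bar> < \<delta> \<longrightarrow> g x < f x" by blast
  have "max p (t - \<delta>) < min p' (t + \<delta>)" using assms(3,4) \<open>p \<noteq> t\<close> \<open>\<delta> > 0\<close> by auto
  then obtain s where s: "max p (t - \<delta>) < s" "s < min p' (t + \<delta>)" "s \<notin> crossings"
    using exists_between_notin_finite[OF finite_crossings] by metis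
  then have "p < s" "s < p'" "\<bar>s - t\<bar> < \<delta>" by (auto simp: abs_less_iff)
  then have "s \<in> J" using in_J_between[OF \<open>p \<in> J\<close> \<open>p' \<in> J\<close>] by simp
  then have "s \<in> regular" "g s < f s" using s(3) \<delta> \<open>\<bar>s - t\<bar> < \<delta>\<close> unfolding regular_def by auto
  moreover have "active s \<noteq> f"
    using active_on_env[OF \<open>s \<in> regular\<close>] lower_env_le[OF \<open>g \<in> F\<close>, of s] \<open>g s < f s\<close> by auto
  ultimately show ?thesis using \<open>p < s\<close> \<open>s < p'\<close> unfolding f_def by blast
qed

lemma max_pieces_subset_if_trivial:
  assumes "\<forall>q1\<in>J. \<forall>q2\<in>J. q1 = q2" shows "max_pieces \<subseteq> {J}"
proof
  fix I assume I: "I \<in> max_pieces"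
  then obtain p where "p \<in> I" "I \<subseteq> J" unfolding max_pieces_def env_piece_def by auto
  then have "x = p" if "x \<in> J" for x using assms that by blast
  then have "J \<subseteq> I" using \<open>p \<in> I\<close> by blast
  then show "I \<in> {J}" using \<open>I \<subseteq> J\<close> by auto
qed

lemma max_piece_has_regular_point:
  assumes I: "I \<in> max_pieces" and "q1 \<in> J" "q2 \<in> J" "q1 \<noteq> q2"
  shows "\<exists>t. t \<in> I \<and> t \<in> regular"
proof -
  obtain a b where "a \<in> I" "b \<in> I" "a < b" using max_piece_nontrivial[OF assms] by blast
  moreover obtain t where "a < t" "t < b" "t \<notin> crossings"
    using exists_between_notin_finite[OF finite_crossings \<open>a < b\<close>] by blast
  moreover have "env_piece J F I" using I unfolding max_pieces_def by auto
  ultimately have "t \<in> I" "t \<in> J" unfolding env_piece_def is_interval_1 by (meson less_imp_le subsetD)+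
  then show ?thesis using \<open>t \<notin> crossings\<close> unfolding regular_def by blast
qed

text \<open>A regular point chosen in each maximal piece determines the piece, and two chosen points
  with the same active function are separated by another active function.\<close>
lemma card_max_pieces_le: "card max_pieces \<le> 4 * card (active ` regular) + 1"
proof (cases "finite max_pieces \<and> \<not> (\<forall>q1\<in>J. \<forall>q2\<in>J. q1 = q2)")
  case False
  then consider "infinite max_pieces" | "\<forall>q1\<in>J. \<forall>q2\<in>J. q1 = q2" by blast
  then show ?thesis
  proof cases
    case 2
    then have "card max_pieces \<le> 1" using card_mono[OF _ max_pieces_subset_if_trivial[OF 2]] by simp
    then show ?thesis by simp
  qed simp
next
  case True
  then obtain q1 q2 where q: "q1 \<in> J" "q2 \<in> J" "q1 \<noteq> q2" by blast
  define rep where "rep I = (SOME t. t \<in> I \<and> t \<in> regular)" for I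
  have rep: "rep I \<in> I \<and> rep I \<in> regular" if "I \<in> max_pieces" for I
    unfolding rep_def using max_piece_has_regular_point[OF that q] by (rule someI_ex)
  have "inj_on rep max_pieces"
  proof (rule inj_onI)
    fix I I' assume "I \<in> max_pieces" "I' \<in> max_pieces" "rep I = rep I'"
    then show "I = I'"
      using rep[of I] rep[of I'] active_on_env
      by (intro max_pieces_eq_if_joined[of I I' "rep I" "rep I"]) auto
  qed
  have "card (rep ` max_pieces) \<le> 4 * card (active ` regular) + 1"
  proof (rule card_le_if_abab_free[OF _ _ finite_active_funs abab_free_active])
    show "finite (rep ` max_pieces)" using True by simp
    show "rep ` max_pieces \<subseteq> regular" using rep by auto
    fix p p' assume pp: "p \<in> rep ` max_pieces" "p' \<in> rep ` max_pieces" "p < p'" "active p = active p'"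
    obtain I I' where I: "I \<in> max_pieces" "I' \<in> max_pieces" "p = rep I" "p' = rep I'"
      using pp(1,2) by auto
    then have "I \<noteq> I'" using pp(3) by auto
    have p: "p \<in> I" "p \<in> regular" and p': "p' \<in> I'" "p' \<in> regular" using rep I by auto
    obtain t where "p \<le> t" "t \<le> p'" "active p t \<noteq> L t"
      using max_pieces_eq_if_joined[OF I(1,2) p p' _ pp(4)] pp(3) \<open>I \<noteq> I'\<close> by force
    then show "\<exists>s\<in>regular. p < s \<and> s < p' \<and> active s \<noteq> active p"
      by (rule active_changes_if_leaves_env[OF p(2) p'(2)])
  qed
  then show ?thesis using card_image[OF \<open>inj_on rep max_pieces\<close>] by simp
qed

section \<open>Anchors and pairs of active functions\<close>

definition anchor :: "(real \<Rightarrow> real) \<Rightarrow> real" where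
  "anchor f = (SOME t. t \<in> regular \<and> active t = f)"

lemma anchor: "f \<in> active ` regular \<Longrightarrow> anchor f \<in> regular \<and> active (anchor f) = f"
  unfolding anchor_def by (rule someI_ex) auto

lemma anchor_in_J: "f \<in> active ` regular \<Longrightarrow> anchor f \<in> J"
  using anchor regular_in_J by blast

lemma inj_on_anchor: "inj_on anchor (active ` regular)"
  by (rule inj_onI) (metis anchor)

lemma anchor_below: "f \<in> active ` regular \<Longrightarrow> g \<in> F \<Longrightarrow> g \<noteq> f \<Longrightarrow> f (anchor f) < g (anchor f)"
  using anchor active_below by metis

lemma anchor_unique: "f \<in> active ` regular \<Longrightarrow> g \<in> F \<Longrightarrow> g (anchor f) = L (anchor f) \<Longrightarrow> g = f"
  using anchor active_unique by metis

lemma active_funs_subset: "active ` regular \<subseteq> F"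
  using active_in_F by blast

lemma crossing_between_anchors:
  assumes f: "f \<in> active ` regular" and g: "g \<in> active ` regular" and "anchor f < anchor g"
  shows "\<exists>z. anchor f < z \<and> z < anchor g \<and> f z = g z"
proof -
  have "f \<in> F" "g \<in> F" "f \<noteq> g" using f g active_funs_subset assms(3) by auto
  then have "f (anchor f) < g (anchor f)" "g (anchor g) < f (anchor g)"
    using anchor_below[OF f, of g] anchor_below[OF g, of f] by auto
  then show ?thesis
    using strict_crossing_between[OF \<open>f \<in> F\<close> \<open>g \<in> F\<close> anchor_in_J[OF f] anchor_in_J[OF g]] assms(3)
    by auto
qed

text \<open>If the crossing \<open>z\<close> of \<open>f\<close> and \<open>g\<close> between their anchors lay on the envelope, the
  function \<open>h\<close> anchored in between would meet one of them twice on one side of \<open>anchor h\<close>,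
  and a third time at \<open>s\<close>.\<close>
lemma crossing_off_env_if_straddled:
  assumes f: "f \<in> active ` regular" and g: "g \<in> active ` regular" and h: "h \<in> active ` regular"
    and order: "anchor f < anchor h" "anchor h < anchor g"
    and s: "s \<in> J" "s < anchor f \<or> anchor g < s" and on_env: "f s = L s" "g s = L s" "h s = L s"
  shows "\<exists>t\<in>J. f t = g t \<and> L t < f t"
proof -
  have F: "f \<in> F" "g \<in> F" "h \<in> F" using f g h active_funs_subset by auto
  have "f \<noteq> g" "f \<noteq> h" "g \<noteq> h" using order by auto
  have J: "anchor f \<in> J" "anchor g \<in> J" "anchor h \<in> J" using anchor_in_J f g h by auto
  obtain z where z: "anchor f < z" "z < anchor g" "f z = g z"
    using crossing_between_anchors[OF f g] order by force
  have "z \<in> J" using in_J_between[OF J(1,2)] z by simp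
  show ?thesis
  proof (cases "L z < f z")
    case True
    then show ?thesis using \<open>z \<in> J\<close> z by blast
  next
    case False
    then have fz: "f z = L z" and gz: "g z = L z" using lower_env_le[OF F(1), of z] z(3) by simp_all
    have "h (anchor h) < g (anchor h)" "h (anchor h) < f (anchor h)"
      using anchor_below[OF h] F \<open>g \<noteq> h\<close> \<open>f \<noteq> h\<close> by auto
    have "z \<noteq> anchor h" using anchor_unique[OF h F(1)] fz \<open>f \<noteq> h\<close> by auto
    then consider "z < anchor h" | "anchor h < z" by linarith
    then show ?thesis
    proof cases
      case 1
      obtain z1 where z1: "z \<le> z1" "z1 \<le> anchor h" "g z1 = h z1"
        using crossing_between[OF F(2,3) \<open>z \<in> J\<close> J(3)] 1 gz lower_env_le[OF F(3), of z]
          \<open>h (anchor h) < g (anchor h)\<close> by force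
      have "z1 < anchor h" using z1 \<open>h (anchor h) < g (anchor h)\<close> by (cases "z1 = anchor h") auto
      obtain z2 where z2: "anchor h < z2" "z2 < anchor g" "h z2 = g z2"
        using strict_crossing_between[OF F(3,2) J(3,2)] order \<open>h (anchor h) < g (anchor h)\<close>
          anchor_below[OF g F(3)] \<open>g \<noteq> h\<close> by force
      have "{z1, z2, s} \<subseteq> J" using in_J_between[OF J(1,2)] z1 \<open>z1 < anchor h\<close> z2 z order s(1) by auto
      then show ?thesis
        using no_three_common_points[OF F(2,3) \<open>g \<noteq> h\<close>, of z1 z2 s] on_env z1 \<open>z1 < anchor h\<close> z2 z s(2)
        by force
    next
      case 2
      obtain z1 where z1: "anchor f < z1" "z1 < anchor h" "f z1 = h z1"
        using strict_crossing_between[OF F(1,3) J(1,3)] order \<open>h (anchor h) < f (anchor h)\<close>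
          anchor_below[OF f F(3)] \<open>f \<noteq> h\<close> by force
      obtain z2 where z2: "anchor h \<le> z2" "z2 \<le> z" "h z2 = f z2"
        using crossing_between[OF F(3,1) J(3) \<open>z \<in> J\<close>] 2 fz lower_env_le[OF F(3), of z]
          \<open>h (anchor h) < f (anchor h)\<close> by force
      have "anchor h < z2" using z2 \<open>h (anchor h) < f (anchor h)\<close> by (cases "z2 = anchor h") auto
      have "{z1, z2, s} \<subseteq> J" using in_J_between[OF J(1,2)] z1 z2 \<open>anchor h < z2\<close> z order s(1) by auto
      then show ?thesis
        using no_three_common_points[OF F(1,3) \<open>f \<noteq> h\<close>, of z1 z2 s] on_env z1 z2 \<open>anchor h < z2\<close> z s(2)
        by force
    qed
  qed
qed

definition anchor_pairs :: "((real \<Rightarrow> real) \<times> (real \<Rightarrow> real)) set" where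
  "anchor_pairs = {(f, g) \<in> active ` regular \<times> active ` regular. anchor f < anchor g}"

definition off_env_pairs :: "((real \<Rightarrow> real) \<times> (real \<Rightarrow> real)) set" where
  "off_env_pairs = {(f, g) \<in> anchor_pairs. \<exists>t\<in>J. f t = g t \<and> L t < f t}"

definition left_at :: "real \<Rightarrow> (real \<Rightarrow> real) set" where
  "left_at s = {f \<in> active ` regular. anchor f < s \<and> f s = L s}"

definition right_at :: "real \<Rightarrow> (real \<Rightarrow> real) set" where
  "right_at s = {f \<in> active ` regular. s < anchor f \<and> f s = L s}"

definition pairs_with_between :: "(real \<Rightarrow> real) set \<Rightarrow> ((real \<Rightarrow> real) \<times> (real \<Rightarrow> real)) set" where
  "pairs_with_between S =
     {(f, g) \<in> S \<times> S. anchor f < anchor g \<and> (\<exists>h\<in>S. anchor f < anchor h \<and> anchor h < anchor g)}"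

definition straddled_pairs :: "real \<Rightarrow> ((real \<Rightarrow> real) \<times> (real \<Rightarrow> real)) set" where
  "straddled_pairs s = pairs_with_between (left_at s) \<union> pairs_with_between (right_at s)"

lemma finite_anchor_pairs: "finite anchor_pairs"
  unfolding anchor_pairs_def using finite_active_funs by (auto intro: finite_subset[of _ "active ` regular \<times> active ` regular"])

lemma straddled_pairs_off_env:
  assumes "s \<in> J" shows "straddled_pairs s \<subseteq> off_env_pairs"
proof
  fix p assume "p \<in> straddled_pairs s"
  then obtain f g h where p: "p = (f, g)" "anchor f < anchor h" "anchor h < anchor g"
    and side: "{f, g, h} \<subseteq> left_at s \<or> {f, g, h} \<subseteq> right_at s"
    unfolding straddled_pairs_def pairs_with_between_def by blast
  then have "f \<in> active ` regular" "g \<in> active ` regular" "h \<in> active ` regular"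
    "s < anchor f \<or> anchor g < s" "f s = L s" "g s = L s" "h s = L s"
    unfolding left_at_def right_at_def by auto
  then have "\<exists>t\<in>J. f t = g t \<and> L t < f t"
    using crossing_off_env_if_straddled p(2,3) \<open>s \<in> J\<close> by blast
  then show "p \<in> off_env_pairs"
    using p \<open>f \<in> active ` regular\<close> \<open>g \<in> active ` regular\<close>
    unfolding off_env_pairs_def anchor_pairs_def by auto
qed

lemma straddled_pairs_disjoint:
  assumes "s \<in> J" "s' \<in> J" "s \<noteq> s'"
  shows "straddled_pairs s \<inter> straddled_pairs s' = {}"
proof (rule ccontr)
  assume "straddled_pairs s \<inter> straddled_pairs s' \<noteq> {}"
  then obtain f g where "(f, g) \<in> straddled_pairs s" "(f, g) \<in> straddled_pairs s'" by auto
  then have fg: "f \<in> active ` regular" "g \<in> active ` regular" "anchor f < anchor g"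
    and at: "f s = g s" "f s' = g s'"
    and outside: "s < anchor f \<or> anchor g < s" "s' < anchor f \<or> anchor g < s'"
    unfolding straddled_pairs_def pairs_with_between_def left_at_def right_at_def by auto
  obtain z where z: "anchor f < z" "z < anchor g" "f z = g z"
    using crossing_between_anchors[OF fg] by blast
  have "z \<in> J" using in_J_between[OF anchor_in_J[OF fg(1)] anchor_in_J[OF fg(2)]] z by simp
  have "f \<in> F" "g \<in> F" "f \<noteq> g" using fg active_funs_subset by auto
  moreover have "z \<noteq> s" "z \<noteq> s'" using z outside by auto
  ultimately show False
    using no_three_common_points[of f g z s s'] \<open>z \<in> J\<close> assms z(3) at by auto
qed

lemma card_left_right_le: "card (left_at s \<times> right_at s) \<le> 2 * card (straddled_pairs s) + 5"
proof -
  have fin: "finite (left_at s)" "finite (right_at s)"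
    using finite_active_funs unfolding left_at_def right_at_def by auto
  have inj: "inj_on anchor (left_at s)" "inj_on anchor (right_at s)"
    using inj_on_anchor unfolding left_at_def right_at_def by (auto intro: inj_on_subset)
  have "(card (left_at s) - 1) * (card (left_at s) - 2) \<le> 2 * card (pairs_with_between (left_at s))"
    "(card (right_at s) - 1) * (card (right_at s) - 2) \<le> 2 * card (pairs_with_between (right_at s))"
    using card_pairs_with_between_ge[OF fin(1) inj(1)] card_pairs_with_between_ge[OF fin(2) inj(2)]
    unfolding pairs_with_between_def by simp_all
  moreover have "card (straddled_pairs s) =
      card (pairs_with_between (left_at s)) + card (pairs_with_between (right_at s))"
  proof -
    have "finite (pairs_with_between (left_at s))" "finite (pairs_with_between (right_at s))"
      using fin unfolding pairs_with_between_def by (auto intro: finite_subset[of _ "_ \<times> _"])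
    moreover have "pairs_with_between (left_at s) \<inter> pairs_with_between (right_at s) = {}"
      unfolding pairs_with_between_def left_at_def right_at_def by auto
    ultimately show ?thesis unfolding straddled_pairs_def by (rule card_Un_disjoint)
  qed
  ultimately show ?thesis
    using mult_le_falling_products_sum[of "card (left_at s)" "card (right_at s)"]
    by (simp add: card_cartesian_product)
qed

lemma card_off_env_pairs_le: "card off_env_pairs \<le> card (off_env_intersections J F)"
proof -
  define wit where "wit f g = (SOME t. t \<in> J \<and> f t = g t \<and> L t < f t)" for f g
  define intersection where "intersection p = ({fst p, snd p}, wit (fst p) (snd p))" for p
  have "off_env_intersections J F \<subseteq> Pow F \<times> crossings"
    unfolding off_env_intersections_def crossings_def by auto
  then have "finite (off_env_intersections J F)"
    using finite_F finite_crossings by (auto intro: finite_subset)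
  moreover have "inj_on intersection off_env_pairs"
  proof (rule inj_onI)
    fix p p' assume "p \<in> off_env_pairs" "p' \<in> off_env_pairs" "intersection p = intersection p'"
    then obtain f g f' g' where "p = (f, g)" "p' = (f', g')" "anchor f < anchor g" "anchor f' < anchor g'"
      "{f, g} = {f', g'}"
      unfolding off_env_pairs_def anchor_pairs_def intersection_def by auto
    then show "p = p'" by (metis doubleton_eq_iff less_asym)
  qed
  moreover have "intersection ` off_env_pairs \<subseteq> off_env_intersections J F"
  proof
    fix x assume "x \<in> intersection ` off_env_pairs"
    then obtain f g where fg: "(f, g) \<in> off_env_pairs" "x = intersection (f, g)" by auto
    then have "\<exists>t. t \<in> J \<and> f t = g t \<and> L t < f t" unfolding off_env_pairs_def by auto
    then have "wit f g \<in> J \<and> f (wit f g) = g (wit f g) \<and> L (wit f g) < f (wit f g)"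
      unfolding wit_def by (rule someI_ex)
    moreover have "f \<in> F" "g \<in> F" "f \<noteq> g"
      using fg(1) active_funs_subset unfolding off_env_pairs_def anchor_pairs_def by auto
    ultimately show "x \<in> off_env_intersections J F"
      unfolding off_env_intersections_def fg(2) intersection_def by auto
  qed
  ultimately show ?thesis by (intro card_inj_on_le)
qed

lemma card_active_funs_sq_le:
  assumes unresolved: "anchor_pairs - off_env_pairs \<subseteq> (\<Union>s\<in>breakpoints. left_at s \<times> right_at s)"
  shows "card (active ` regular) * card (active ` regular) - card (active ` regular)
    \<le> 6 * card off_env_pairs + 10 * card breakpoints"
proof -
  have off_sub: "off_env_pairs \<subseteq> anchor_pairs" unfolding off_env_pairs_def by auto
  then have fin_off: "finite off_env_pairs" using finite_anchor_pairs by (rule finite_subset)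
  have "breakpoints \<subseteq> J" unfolding breakpoints_def by auto
  have fin_lr: "finite (left_at s \<times> right_at s)" for s
    using finite_active_funs unfolding left_at_def right_at_def by auto
  have straddled: "straddled_pairs s \<subseteq> off_env_pairs" "finite (straddled_pairs s)" if "s \<in> breakpoints" for s
    using straddled_pairs_off_env[of s] that \<open>breakpoints \<subseteq> J\<close> finite_subset[OF _ fin_off] by auto
  have "card (anchor_pairs - off_env_pairs) \<le> card (\<Union>s\<in>breakpoints. left_at s \<times> right_at s)"
    by (intro card_mono[OF _ unresolved] finite_UN_I finite_breakpoints fin_lr)
  also have "\<dots> \<le> (\<Sum>s\<in>breakpoints. card (left_at s \<times> right_at s))"
    by (rule card_UN_le[OF finite_breakpoints])
  also have "\<dots> \<le> (\<Sum>s\<in>breakpoints. 2 * card (straddled_pairs s) + 5)"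
    by (intro sum_mono card_left_right_le)
  also have "\<dots> = 2 * (\<Sum>s\<in>breakpoints. card (straddled_pairs s)) + 5 * card breakpoints"
    by (simp add: sum.distrib sum_distrib_left)
  also have "(\<Sum>s\<in>breakpoints. card (straddled_pairs s)) = card (\<Union>s\<in>breakpoints. straddled_pairs s)"
    using straddled_pairs_disjoint \<open>breakpoints \<subseteq> J\<close> straddled(2)
    by (intro card_UN_disjoint[OF finite_breakpoints, symmetric]) auto
  also have "card (\<Union>s\<in>breakpoints. straddled_pairs s) \<le> card off_env_pairs"
    using straddled(1) by (intro card_mono[OF fin_off]) blast
  finally have "card (anchor_pairs - off_env_pairs) \<le> 2 * card off_env_pairs + 5 * card breakpoints"
    by simp
  moreover have "card anchor_pairs = card off_env_pairs + card (anchor_pairs - off_env_pairs)"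
    using card_Diff_subset[OF fin_off off_sub] card_mono[OF finite_anchor_pairs off_sub] by simp
  moreover have "card (active ` regular) * card (active ` regular) - card (active ` regular)
      \<le> 2 * card anchor_pairs"
    using card_ordered_pairs_ge[OF finite_active_funs inj_on_anchor] unfolding anchor_pairs_def .
  ultimately show ?thesis by linarith
qed

text \<open>At a transversal crossing on the envelope that is not a breakpoint, both functions would
  be tangent there to the single function forming the envelope nearby, so their squares would
  differ by a multiple of \<open>(t - z)\<^sup>2\<close>, which cannot change sign.\<close>
lemma crossing_on_env_is_breakpoint:
  assumes sq: "\<And>f. f \<in> F \<Longrightarrow> sqrt_quadratic_on J f"
    and "f \<in> F" "g \<in> F" "a \<in> J" "b \<in> J" "a < z" "z < b"
    and "f a < g a" "g b < f b" "f z = L z" "g z = L z"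
  shows "z \<in> breakpoints"
proof (rule ccontr)
  assume "z \<notin> breakpoints"
  have "z \<in> J" using in_J_between[OF assms(4,5)] assms(6,7) by simp
  then obtain y \<epsilon> where "y \<in> F" "\<epsilon> > 0" and y: "\<forall>t\<in>J. \<bar>t - z\<bar> < \<epsilon> \<longrightarrow> y t = L t"
    using \<open>z \<notin> breakpoints\<close> assms(4-7) unfolding breakpoints_def by blast
  define r where "r = min \<epsilon> (min (z - a) (b - z))"
  have "r > 0" unfolding r_def using \<open>\<epsilon> > 0\<close> assms(6,7) by simp
  have near: "t \<in> J \<and> y t = L t" if "\<bar>t - z\<bar> < r" for t
    using in_J_between[OF assms(4,5), of t] y that unfolding r_def by (auto simp: abs_less_iff)
  have tangent: "\<exists>A. \<forall>t\<in>J. (h t)\<^sup>2 - (y t)\<^sup>2 = A * (t - z)\<^sup>2" if "h \<in> F" "h z = L z" for h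
    using sqrt_quadratic_tangent[OF sq[OF that(1)] sq[OF \<open>y \<in> F\<close>] \<open>r > 0\<close>] near lower_env_le[OF that(1)]
      that(2) near[of z] \<open>r > 0\<close> by simp
  obtain A B where "\<forall>t\<in>J. (f t)\<^sup>2 - (y t)\<^sup>2 = A * (t - z)\<^sup>2" "\<forall>t\<in>J. (g t)\<^sup>2 - (y t)\<^sup>2 = B * (t - z)\<^sup>2"
    using tangent assms(2,3,10,11) by metis
  then have diff: "(f t)\<^sup>2 - (g t)\<^sup>2 = (A - B) * (t - z)\<^sup>2" if "t \<in> J" for t
    using that by (simp add: algebra_simps)
  have nonneg: "0 \<le> h t" if "h \<in> F" "t \<in> J" for h t
    using sqrt_quadratic_on_square[OF sq[OF that(1)]] that(2) by blast
  have "(f a)\<^sup>2 < (g a)\<^sup>2" "(g b)\<^sup>2 < (f b)\<^sup>2"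
    using assms(8,9) nonneg assms(2-5) by (auto intro: power_strict_mono)
  then have "(A - B) * (a - z)\<^sup>2 < 0" "(A - B) * (b - z)\<^sup>2 > 0"
    using diff[OF assms(4)] diff[OF assms(5)] by simp_all
  then show False by (simp add: mult_less_0_iff zero_less_mult_iff)
qed

lemma unresolved_pairs_at_breakpoints:
  assumes sq: "\<And>f. f \<in> F \<Longrightarrow> sqrt_quadratic_on J f"
  shows "anchor_pairs - off_env_pairs \<subseteq> (\<Union>s\<in>breakpoints. left_at s \<times> right_at s)"
proof
  fix p assume p: "p \<in> anchor_pairs - off_env_pairs"
  then obtain f g where fg: "p = (f, g)" "f \<in> active ` regular" "g \<in> active ` regular" "anchor f < anchor g"
    unfolding anchor_pairs_def by auto
  have F: "f \<in> F" "g \<in> F" "f \<noteq> g" using fg active_funs_subset by auto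
  obtain z where z: "anchor f < z" "z < anchor g" "f z = g z"
    using crossing_between_anchors[OF fg(2-4)] by blast
  have J: "anchor f \<in> J" "anchor g \<in> J" using anchor_in_J fg by auto
  then have "z \<in> J" using in_J_between[OF J] z by simp
  then have "\<not> L z < f z" using p fg z unfolding off_env_pairs_def by auto
  then have fz: "f z = L z" and gz: "g z = L z" using lower_env_le[OF F(1), of z] z(3) by auto
  have "f (anchor f) < g (anchor f)" "g (anchor g) < f (anchor g)"
    using anchor_below[OF fg(2) F(2)] anchor_below[OF fg(3) F(1)] F(3) by auto
  then have "z \<in> breakpoints"
    using crossing_on_env_is_breakpoint[OF sq F(1,2) J z(1,2)] fz gz by blast
  moreover have "f \<in> left_at z" "g \<in> right_at z" unfolding left_at_def right_at_def using fg z fz gz by auto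
  ultimately show "p \<in> (\<Union>s\<in>breakpoints. left_at s \<times> right_at s)" using fg(1) by blast
qed

lemma off_env_intersections_ge:
  assumes sq: "\<And>f. f \<in> F \<Longrightarrow> sqrt_quadratic_on J f" and "2000 \<le> env_complexity J F"
  shows "(real (env_complexity J F))\<^sup>2 / 2000 \<le> real (card (off_env_intersections J F))"
proof -
  have "(real (env_complexity J F))\<^sup>2 / 2000 \<le> real (card off_env_pairs)"
  proof (rule quadratic_bound_from_linear_bounds)
    show "env_complexity J F \<le> 4 * card (active ` regular) + 1"
      using card_max_pieces_le env_complexity_eq_card_max_pieces by simp
    show "card breakpoints \<le> 4 * card (active ` regular) + 1" by (rule card_breakpoints_le)
    show "card (active ` regular) * card (active ` regular) - card (active ` regular)
        \<le> 6 * card off_env_pairs + 10 * card breakpoints"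
      by (rule card_active_funs_sq_le[OF unresolved_pairs_at_breakpoints[OF sq]])
  qed fact
  also have "\<dots> \<le> real (card (off_env_intersections J F))" using card_off_env_pairs_le by simp
  finally show ?thesis .
qed

end

theorem mainTheorem12:
  shows "\<exists>c::real. c > 0 \<and> (\<exists>k0::nat. \<forall>(J::real set) (F::(real \<Rightarrow> real) set).
    is_interval J \<longrightarrow> finite F \<longrightarrow>
    (\<forall>f\<in>F. \<forall>g\<in>F. f \<noteq> g \<longrightarrow> (\<exists>t\<in>J. f t \<noteq> g t)) \<longrightarrow>
    (\<forall>f\<in>F. sqrt_quadratic_on J f) \<longrightarrow>
    env_complexity J F \<ge> k0 \<longrightarrow>
    c * (real (env_complexity J F))\<^sup>2 \<le> real (card (off_env_intersections J F)))"
proof (intro exI[of _ "1/2000"] conjI exI[of _ "2000::nat"] allI impI)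
  fix J :: "real set" and F :: "(real \<Rightarrow> real) set"
  assume "is_interval J" "finite F" and distinct: "\<forall>f\<in>F. \<forall>g\<in>F. f \<noteq> g \<longrightarrow> (\<exists>t\<in>J. f t \<noteq> g t)"
    and sq: "\<forall>f\<in>F. sqrt_quadratic_on J f" and k: "2000 \<le> env_complexity J F"
  have "F \<noteq> {}"
  proof
    assume "F = {}"
    then have "env_complexity J F = 0" unfolding env_complexity_def env_piece_def by simp
    then show False using k by simp
  qed
  interpret envelope_family J F
    using \<open>is_interval J\<close> \<open>finite F\<close> \<open>F \<noteq> {}\<close> sq distinct
      sqrt_quadratic_on_continuous sqrt_quadratic_agree_at_most_twice
    by unfold_locales auto
  show "1 / 2000 * (real (env_complexity J F))\<^sup>2 \<le> real (card (off_env_intersections J F))"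
    using off_env_intersections_ge sq k by simp
qed simp

end
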